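(* The image of $\phi\colon M\to\mathbb R^n\times\mathbb C^n$ is the set $K=\{(a,b)\in\mathbb R^n\times\mathbb C^n: a_k\geqslant|b_k|\ \text{for } k=1,\dots,d\}$. Moreover $\phi$ induces a finite-to-one surjection $\tilde\phi\colon M/\mathbb T^n\to K$, and the fibre of $\tilde\phi$ over $(a,b)\in K$ consists of exactly $2^m$ points, where $m$ is the number of indices $k$ with $a_k>|b_k|$.
   Context: Let $\mathbb C^{d,d}=\mathbb C^d\times\mathbb C^d$ with coordinates $(z,w)$, metric $g=\mathrm{Re}\sum_k(dz_k\,d\bar z_k-dw_k\,d\bar w_k)$, $I(z,w)=(iz,-iw)$, $S(z,w)=(w,z)$, $T=IS$, and forms $\omega_A(Y,Z)=g(Y,AZ)$. The torus $\mathbb T^d$ acts by $(z_k,w_k)\mapsto(e^{i\theta_k}z_k,e^{i\theta_k}w_k)$. Fix $u_1,\dots,u_d\in\mathbb Z^n$ spanning $\mathbb R^n$; let $\beta\colon\mathbb R^d\to\mathbb R^n$, $e_k\mapsto u_k$, $\mathfrak n=\ker\beta$ with inclusion $\iota$, and $N\subset\mathbb T^d$ the kernel of the induced homomorphism $\mathbb T^d\to\mathbb T^n$. Identify $\mathbb R^d$ with its dual by the standard inner product. Fix real constants $\lambda^{(j)}_k$ ($j=1,2,3$, $k=1,\dots,d$), put $\lambda^{(c)}_k=\lambda^{(2)}_k+i\lambda^{(3)}_k$, and let $\mu=(\mu_I,\mu_S,\mu_T)$ with $\mu_I(z,w)=\sum_k(\tfrac12(|z_k|^2+|w_k|^2)+\lambda^{(1)}_k)\iota^*e_k$,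 $(\mu_S+i\mu_T)(z,w)=\sum_k(iz_k\bar w_k+\lambda^{(c)}_k)\iota^*e_k$. Let $M=\mu^{-1}(0)/N$, with the residual action of $\mathbb T^n=\mathbb T^d/N$. For $(z,w)\in\mu^{-1}(0)$ there are unique $a\in\mathbb R^n$, $b\in\mathbb C^n$ with $\langle a,u_k\rangle=\tfrac12(|z_k|^2+|w_k|^2)+\lambda^{(1)}_k$ and $\langle b,u_k\rangle=iz_k\bar w_k+\lambda^{(c)}_k$ for all $k$ ($\langle\cdot,\cdot\rangle$ the standard inner product, extended complex-bilinearly); set $\phi([z,w])=(a,b)$. For $(a,b)\in\mathbb R^n\times\mathbb C^n$ write $a_k=\langle a,u_k\rangle-\lambda^{(1)}_k$, $b_k=\langle b,u_k\rangle-\lambda^{(c)}_k$. *)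

theory Defs
  imports "HOL-Analysis.Analysis"
begin

text \<open>Coordinates: C^d x C^d is complex^'d x complex^'d, R^n is real^'n, C^n is complex^'n,
  with d = CARD('d), n = CARD('n). The vectors u_k are u k :: real^'n.\<close>

definition cinner :: "complex^'n \<Rightarrow> real^'n \<Rightarrow> complex" where
  "cinner b v = (\<Sum>j\<in>UNIV. b$j * complex_of_real (v$j))"

definition lam_c :: "('d \<Rightarrow> real) \<Rightarrow> ('d \<Rightarrow> real) \<Rightarrow> 'd \<Rightarrow> complex" where
  "lam_c l2 l3 k = Complex (l2 k) (l3 k)"

text \<open>The Lie algebra n = ker beta of N, beta(e_k) = u_k.\<close>
definition nker :: "('d::finite \<Rightarrow> real^'n) \<Rightarrow> (real^'d) set" where
  "nker u = {x. (\<Sum>k\<in>UNIV. x$k *\<^sub>R u k) = 0}"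

text \<open>Components of mu (as functions of the coefficients of iota^* e_k).\<close>
definition muI_coeff :: "('d \<Rightarrow> real) \<Rightarrow> complex^'d \<Rightarrow> complex^'d \<Rightarrow> 'd \<Rightarrow> real" where
  "muI_coeff l1 z w k = (norm (z$k))\<^sup>2 / 2 + (norm (w$k))\<^sup>2 / 2 + l1 k"

definition muC_coeff :: "('d \<Rightarrow> real) \<Rightarrow> ('d \<Rightarrow> real) \<Rightarrow> complex^'d \<Rightarrow> complex^'d \<Rightarrow> 'd \<Rightarrow> complex" where
  "muC_coeff l2 l3 z w k = \<i> * z$k * cnj (w$k) + lam_c l2 l3 k"

text \<open>mu(z,w) = 0: the functionals sum_k c_k iota^* e_k vanish on n (for mu_I real, for
  mu_S + i mu_T complex-linearly extended).\<close>
definition level_set ::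
  "('d::finite \<Rightarrow> real^'n) \<Rightarrow> ('d \<Rightarrow> real) \<Rightarrow> ('d \<Rightarrow> real) \<Rightarrow> ('d \<Rightarrow> real)
    \<Rightarrow> ((complex^'d) \<times> (complex^'d)) set" where
  "level_set u l1 l2 l3 = {(z, w).
      (\<forall>x\<in>nker u. (\<Sum>k\<in>UNIV. muI_coeff l1 z w k * x$k) = 0) \<and>
      (\<forall>x\<in>nker u. (\<Sum>k\<in>UNIV. muC_coeff l2 l3 z w k * complex_of_real (x$k)) = 0)}"

text \<open>The map phi (defined on the level set, hence on M = level set / N).\<close>
definition phi ::
  "('d::finite \<Rightarrow> real^'n::finite) \<Rightarrow> ('d \<Rightarrow> real) \<Rightarrow> ('d \<Rightarrow> real) \<Rightarrow> ('d \<Rightarrow> real)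
    \<Rightarrow> (complex^'d) \<times> (complex^'d) \<Rightarrow> (real^'n) \<times> (complex^'n)" where
  "phi u l1 l2 l3 p = (THE (a, b).
      (\<forall>k. a \<bullet> u k = muI_coeff l1 (fst p) (snd p) k) \<and>
      (\<forall>k. cinner b (u k) = muC_coeff l2 l3 (fst p) (snd p) k))"

definition a_comp :: "('d \<Rightarrow> real^'n) \<Rightarrow> ('d \<Rightarrow> real) \<Rightarrow> real^'n \<Rightarrow> 'd \<Rightarrow> real" where
  "a_comp u l1 a k = a \<bullet> u k - l1 k"

definition b_comp :: "('d \<Rightarrow> real^'n::finite) \<Rightarrow> ('d \<Rightarrow> real) \<Rightarrow> ('d \<Rightarrow> real)
    \<Rightarrow> complex^'n \<Rightarrow> 'd \<Rightarrow> complex" where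
  "b_comp u l2 l3 b k = cinner b (u k) - lam_c l2 l3 k"

definition Kset :: "('d \<Rightarrow> real^'n::finite) \<Rightarrow> ('d \<Rightarrow> real) \<Rightarrow> ('d \<Rightarrow> real) \<Rightarrow> ('d \<Rightarrow> real)
    \<Rightarrow> ((real^'n) \<times> (complex^'n)) set" where
  "Kset u l1 l2 l3 = {(a, b). \<forall>k. a_comp u l1 a k \<ge> cmod (b_comp u l2 l3 b k)}"

definition torus_act :: "('d \<Rightarrow> complex) \<Rightarrow> (complex^'d) \<times> (complex^'d) \<Rightarrow> (complex^'d) \<times> (complex^'d)" where
  "torus_act t p = ((\<chi> k. t k * fst p $ k), (\<chi> k. t k * snd p $ k))"

definition torus :: "('d \<Rightarrow> complex) set" where
  "torus = {t. \<forall>k. cmod (t k) = 1}"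

definition torus_orbit :: "(complex^'d) \<times> (complex^'d) \<Rightarrow> ((complex^'d) \<times> (complex^'d)) set" where
  "torus_orbit p = (\<lambda>t. torus_act t p) ` torus"

end

theory Submission
  imports Defs
begin

(* Since the u_k span R^n, mu(z,w) = 0 says exactly that the coefficient vectors of mu_I and
   mu_S + i mu_T annihilate ker beta, i.e. are (<a,u_k>)_k and (<b,u_k>)_k for a unique (a,b).
   Hence the fibre of phi over (a,b) is the product over k of the fibres of the circle moment
   map (z,w) |-> ((|z|^2 + |w|^2)/2, i z conj(w)) on C^2 over (a_k, b_k). The circle orbits in
   such a fibre are classified by the moduli (|z|,|w|), i.e. by the nonnegative solutions of
   r^2 + s^2 = 2 a_k, r s = |b_k|: there are none if a_k < |b_k|, one if a_k = |b_k| and two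
   if a_k > |b_k|.
   As N lies in T^d, the points of M/T^n are the T^d-orbits in mu^-1(0). *)

lemma inner_sum_scaleR_right:
  fixes u :: "'d::finite \<Rightarrow> real^'n::finite"
  shows "a \<bullet> (\<Sum>k\<in>UNIV. x$k *\<^sub>R u k) = (\<Sum>k\<in>UNIV. (a \<bullet> u k) * x$k)"
  by (simp add: inner_sum_right mult.commute)

lemma annihilator_nker_iff:
  fixes u :: "'d::finite \<Rightarrow> real^'n::finite" and c :: "'d \<Rightarrow> real"
  shows "(\<forall>x\<in>nker u. (\<Sum>k\<in>UNIV. c k * x$k) = 0) \<longleftrightarrow> (\<exists>a. \<forall>k. a \<bullet> u k = c k)"
proof
  assume c: "\<forall>x\<in>nker u. (\<Sum>k\<in>UNIV. c k * x$k) = 0"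
  define f where "f a = (\<chi> k. a \<bullet> u k)" for a :: "real^'n"
  have "linear f" by (rule linearI) (auto simp: f_def vec_eq_iff inner_add_left)
  then have range_f: "span (range f) = range f" using span_linear_image[of f UNIV] by simp
  obtain y z where y: "y \<in> span (range f)" and z: "\<And>v. v \<in> span (range f) \<Longrightarrow> orthogonal z v"
    and cyz: "(\<chi> k. c k) = y + z"
    by (rule orthogonal_subspace_decomp_exists[of "range f" "\<chi> k. c k"]) blast
  define v where "v = (\<Sum>k\<in>UNIV. z$k *\<^sub>R u k)"
  \<comment> \<open>the component of \<open>c\<close> orthogonal to the range of \<open>f\<close> lies in the kernel, hence vanishes\<close>
  have "v \<bullet> v = z \<bullet> f v"
    unfolding f_def inner_vec_def[of z] v_def inner_sum_scaleR_right by (simp add: mult.commute)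
  also have "\<dots> = 0" using z range_f by (simp add: orthogonal_def)
  finally have "z \<in> nker u" by (simp add: nker_def v_def)
  with c have "(\<chi> k. c k) \<bullet> z = 0" by (simp add: inner_vec_def)
  moreover have "y \<bullet> z = 0" using z[OF y] by (simp add: orthogonal_def inner_commute)
  ultimately have "z = 0" using cyz by (simp add: inner_add_left)
  then obtain a where "(\<chi> k. c k) = f a" using cyz y range_f by auto
  then show "\<exists>a. \<forall>k. a \<bullet> u k = c k" by (auto simp: f_def vec_eq_iff)
next
  assume "\<exists>a. \<forall>k. a \<bullet> u k = c k"
  then obtain a where "\<And>k. c k = a \<bullet> u k" by metis
  then show "\<forall>x\<in>nker u. (\<Sum>k\<in>UNIV. c k * x$k) = 0"
    by (simp add: nker_def flip: inner_sum_scaleR_right)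
qed

lemma Re_cinner: "Re (cinner b v) = (\<chi> j. Re (b$j)) \<bullet> v"
  by (simp add: cinner_def inner_vec_def Re_sum)

lemma Im_cinner: "Im (cinner b v) = (\<chi> j. Im (b$j)) \<bullet> v"
  by (simp add: cinner_def inner_vec_def Im_sum)

lemma complex_annihilator_nker_iff:
  fixes u :: "'d::finite \<Rightarrow> real^'n::finite" and c :: "'d \<Rightarrow> complex"
  shows "(\<forall>x\<in>nker u. (\<Sum>k\<in>UNIV. c k * complex_of_real (x$k)) = 0) \<longleftrightarrow>
    (\<exists>b. \<forall>k. cinner b (u k) = c k)"
proof -
  have "(\<forall>x\<in>nker u. (\<Sum>k\<in>UNIV. c k * complex_of_real (x$k)) = 0) \<longleftrightarrow>
    (\<forall>x\<in>nker u. (\<Sum>k\<in>UNIV. Re (c k) * x$k) = 0) \<and>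
    (\<forall>x\<in>nker u. (\<Sum>k\<in>UNIV. Im (c k) * x$k) = 0)"
    by (simp add: complex_eq_iff Re_sum Im_sum ball_conj_distrib)
  also have "\<dots> \<longleftrightarrow> (\<exists>a. \<forall>k. a \<bullet> u k = Re (c k)) \<and> (\<exists>a. \<forall>k. a \<bullet> u k = Im (c k))"
    by (simp add: annihilator_nker_iff)
  also have "\<dots> \<longleftrightarrow> (\<exists>b. \<forall>k. cinner b (u k) = c k)"
  proof
    assume "(\<exists>a. \<forall>k. a \<bullet> u k = Re (c k)) \<and> (\<exists>a. \<forall>k. a \<bullet> u k = Im (c k))"
    then obtain a1 a2 where "\<forall>k. a1 \<bullet> u k = Re (c k)" "\<forall>k. a2 \<bullet> u k = Im (c k)" by blast
    then have "\<forall>k. cinner (\<chi> j. Complex (a1$j) (a2$j)) (u k) = c k"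
      by (simp add: complex_eq_iff Re_cinner Im_cinner vec_lambda_eta)
    then show "\<exists>b. \<forall>k. cinner b (u k) = c k" ..
  next
    assume "\<exists>b. \<forall>k. cinner b (u k) = c k"
    then show "(\<exists>a. \<forall>k. a \<bullet> u k = Re (c k)) \<and> (\<exists>a. \<forall>k. a \<bullet> u k = Im (c k))"
      by (metis Re_cinner Im_cinner)
  qed
  finally show ?thesis .
qed

lemma inner_spanning_inject:
  fixes u :: "'d::finite \<Rightarrow> real^'n::finite"
  assumes "span (range u) = UNIV" and "\<forall>k. a \<bullet> u k = a' \<bullet> u k"
  shows "a = a'"
proof -
  have "orthogonal (a - a') (a - a')"
  proof (rule orthogonal_to_span)
    show "a - a' \<in> span (range u)" using assms(1) by simp
    show "\<And>y. y \<in> range u \<Longrightarrow> orthogonal (a - a') y"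
      using assms(2) by (auto simp: orthogonal_def inner_diff_left)
  qed
  then show ?thesis by (simp add: orthogonal_self)
qed

lemma cinner_spanning_inject:
  fixes u :: "'d::finite \<Rightarrow> real^'n::finite"
  assumes "span (range u) = UNIV" and "\<forall>k. cinner b (u k) = cinner b' (u k)"
  shows "b = b'"
proof -
  have "(\<chi> j. Re (b$j)) = (\<chi> j. Re (b'$j))"
    by (rule inner_spanning_inject[OF assms(1)]) (simp add: assms(2) flip: Re_cinner)
  moreover have "(\<chi> j. Im (b$j)) = (\<chi> j. Im (b'$j))"
    by (rule inner_spanning_inject[OF assms(1)]) (simp add: assms(2) flip: Im_cinner)
  ultimately show ?thesis by (simp add: vec_eq_iff complex_eq_iff)
qed

lemma level_set_iff:
  fixes u :: "'d::finite \<Rightarrow> real^'n::finite"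
  shows "p \<in> level_set u l1 l2 l3 \<longleftrightarrow>
    (\<exists>a. \<forall>k. a \<bullet> u k = muI_coeff l1 (fst p) (snd p) k) \<and>
    (\<exists>b. \<forall>k. cinner b (u k) = muC_coeff l2 l3 (fst p) (snd p) k)"
  by (cases p) (simp add: level_set_def annihilator_nker_iff complex_annihilator_nker_iff)

lemma phi_eqI:
  fixes u :: "'d::finite \<Rightarrow> real^'n::finite"
  assumes "span (range u) = UNIV"
    and "\<forall>k. a \<bullet> u k = muI_coeff l1 (fst p) (snd p) k"
    and "\<forall>k. cinner b (u k) = muC_coeff l2 l3 (fst p) (snd p) k"
  shows "phi u l1 l2 l3 p = (a, b)"
  unfolding phi_def
proof (rule the_equality)
  fix ab :: "(real^'n) \<times> (complex^'n)"
  assume "case ab of (a, b) \<Rightarrow> (\<forall>k. a \<bullet> u k = muI_coeff l1 (fst p) (snd p) k) \<and>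
      (\<forall>k. cinner b (u k) = muC_coeff l2 l3 (fst p) (snd p) k)"
  then show "ab = (a, b)"
    using assms by (cases ab) (auto intro: inner_spanning_inject cinner_spanning_inject)
qed (use assms in simp)

definition circle_moment :: "complex \<Rightarrow> complex \<Rightarrow> real \<times> complex" where
  "circle_moment z w = (cmod z ^ 2 / 2 + cmod w ^ 2 / 2, \<i> * z * cnj w)"

lemma phi_fibre_iff:
  fixes u :: "'d::finite \<Rightarrow> real^'n::finite"
  assumes "span (range u) = UNIV"
  shows "p \<in> level_set u l1 l2 l3 \<and> phi u l1 l2 l3 p = (a, b) \<longleftrightarrow>
    (\<forall>k. circle_moment (fst p $ k) (snd p $ k) = (a_comp u l1 a k, b_comp u l2 l3 b k))"
    (is "_ \<longleftrightarrow> ?moment a b")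
proof -
  define solves where "solves a b \<longleftrightarrow> (\<forall>k. a \<bullet> u k = muI_coeff l1 (fst p) (snd p) k) \<and>
    (\<forall>k. cinner b (u k) = muC_coeff l2 l3 (fst p) (snd p) k)" for a b
  have moment_iff: "?moment a b \<longleftrightarrow> solves a b" for a b
    by (auto simp: solves_def circle_moment_def a_comp_def b_comp_def muI_coeff_def
        muC_coeff_def power2_eq_square)
  have "p \<in> level_set u l1 l2 l3 \<longleftrightarrow> (\<exists>a b. solves a b)"
    by (simp add: level_set_iff solves_def)
  moreover have "solves a' b' \<Longrightarrow> phi u l1 l2 l3 p = (a', b')" for a' b'
    using phi_eqI[OF assms] by (simp add: solves_def)
  ultimately show ?thesis by (auto simp: moment_iff)
qed

lemma circle_moment_mult:
  assumes "cmod t = 1"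
  shows "circle_moment (t * z) (t * w) = circle_moment z w"
proof -
  have "t * cnj t = 1" using assms complex_norm_square[of t] by simp
  then show ?thesis by (simp add: circle_moment_def norm_mult assms algebra_simps)
qed

lemma unit_multiple_if_same_moduli:
  fixes z w z' w' :: complex
  assumes "cmod z = cmod z'" and "cmod w = cmod w'" and "z * cnj w = z' * cnj w'"
  shows "\<exists>t. cmod t = 1 \<and> z' = t * z \<and> w' = t * w"
proof (cases "z = 0")
  case False
  define t where "t = z' / z"
  have "z' \<noteq> 0" using assms(1) False by auto
  then have t: "cmod t = 1" "z' = t * z" using assms(1) False by (simp_all add: t_def norm_divide)
  have "w' = t * w"
  proof (cases "w = 0")
    case True
    then show ?thesis using assms(2) by simp
  next
    case False
    have "z * cnj w = z * (t * cnj w')" using assms(3) t(2) by simp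
    then have "w = cnj t * w'" using \<open>z \<noteq> 0\<close> by (metis complex_cnj_cnj complex_cnj_mult mult_left_cancel)
    moreover have "t * cnj t = 1" using t(1) complex_norm_square[of t] by simp
    ultimately show ?thesis by (metis mult.assoc mult_1)
  qed
  with t show ?thesis by blast
next
  case True
  then have "z' = 0" using assms(1) by simp
  show ?thesis
  proof (cases "w = 0")
    case True
    then show ?thesis using assms(2) \<open>z = 0\<close> \<open>z' = 0\<close> by (intro exI[of _ 1]) simp
  next
    case False
    moreover have "w' \<noteq> 0" using assms(2) False by auto
    ultimately show ?thesis using assms(2) \<open>z = 0\<close> \<open>z' = 0\<close>
      by (intro exI[of _ "w' / w"]) (simp add: norm_divide)
  qed
qed

definition modulus_pairs :: "real \<Rightarrow> real \<Rightarrow> (real \<times> real) set" where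
  "modulus_pairs A \<beta> = {(r, s). r \<ge> 0 \<and> s \<ge> 0 \<and> r\<^sup>2/2 + s\<^sup>2/2 = A \<and> r * s = \<beta>}"

lemma modulus_pairs_eq:
  assumes "0 \<le> \<beta>" and "\<beta> \<le> A"
  defines "\<sigma> \<equiv> sqrt (2 * (A + \<beta>))" and "\<delta> \<equiv> sqrt (2 * (A - \<beta>))"
  shows "modulus_pairs A \<beta> = {((\<sigma> + \<delta>) / 2, (\<sigma> - \<delta>) / 2), ((\<sigma> - \<delta>) / 2, (\<sigma> + \<delta>) / 2)}"
proof -
  have nonneg: "0 \<le> \<delta>" "\<delta> \<le> \<sigma>" using assms by (auto simp: \<sigma>_def \<delta>_def)
  have squares: "\<sigma>\<^sup>2 = 2 * (A + \<beta>)" "\<delta>\<^sup>2 = 2 * (A - \<beta>)" using assms by (auto simp: \<sigma>_def \<delta>_def)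
  show ?thesis
  proof (intro equalityI subsetI)
    fix p assume "p \<in> modulus_pairs A \<beta>"
    then obtain r s where p: "p = (r, s)" and rs: "r \<ge> 0" "s \<ge> 0" "r\<^sup>2/2 + s\<^sup>2/2 = A" "r * s = \<beta>"
      by (auto simp: modulus_pairs_def)
    have "(r + s)\<^sup>2 = 2 * (A + \<beta>)" "(r - s)\<^sup>2 = 2 * (A - \<beta>)"
      using rs by (simp_all add: power2_eq_square algebra_simps)
    then have "r + s = \<sigma>" "\<bar>r - s\<bar> = \<delta>"
      using rs unfolding \<sigma>_def \<delta>_def by (metis real_sqrt_abs abs_of_nonneg add_nonneg_nonneg)+
    then show "p \<in> {((\<sigma> + \<delta>) / 2, (\<sigma> - \<delta>) / 2), ((\<sigma> - \<delta>) / 2, (\<sigma> + \<delta>) / 2)}"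
      using p by (auto simp: abs_if)
  next
    have "((\<sigma> + \<delta>) / 2)\<^sup>2 / 2 + ((\<sigma> - \<delta>) / 2)\<^sup>2 / 2 = A"
      "((\<sigma> + \<delta>) / 2) * ((\<sigma> - \<delta>) / 2) = \<beta>"
      using squares by (simp_all add: power2_eq_square field_simps)
    then show "p \<in> modulus_pairs A \<beta>"
      if "p \<in> {((\<sigma> + \<delta>) / 2, (\<sigma> - \<delta>) / 2), ((\<sigma> - \<delta>) / 2, (\<sigma> + \<delta>) / 2)}" for p
      using that nonneg by (auto simp: modulus_pairs_def add.commute mult.commute)
  qed
qed

lemma modulus_pairs_eq_empty_iff: "modulus_pairs A \<beta> = {} \<longleftrightarrow> \<not> (0 \<le> \<beta> \<and> \<beta> \<le> A)"
proof
  assume "modulus_pairs A \<beta> = {}"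
  then show "\<not> (0 \<le> \<beta> \<and> \<beta> \<le> A)" using modulus_pairs_eq by blast
next
  have "0 \<le> \<beta> \<and> \<beta> \<le> A" if "(r, s) \<in> modulus_pairs A \<beta>" for r s
  proof -
    have "0 \<le> (r - s)\<^sup>2" by simp
    with that show ?thesis by (auto simp: modulus_pairs_def power2_eq_square algebra_simps)
  qed
  then show "\<not> (0 \<le> \<beta> \<and> \<beta> \<le> A) \<Longrightarrow> modulus_pairs A \<beta> = {}" by auto
qed

lemma finite_modulus_pairs: "finite (modulus_pairs A \<beta>)"
proof (cases "0 \<le> \<beta> \<and> \<beta> \<le> A")
  case True
  then show ?thesis by (simp add: modulus_pairs_eq)
next
  case False
  then have "modulus_pairs A \<beta> = {}" using modulus_pairs_eq_empty_iff by blast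
  then show ?thesis by simp
qed

lemma card_modulus_pairs:
  assumes "0 \<le> \<beta>" and "\<beta> \<le> A"
  shows "card (modulus_pairs A \<beta>) = (if \<beta> < A then 2 else 1)"
  using assms by (simp add: modulus_pairs_eq)

lemma moduli_circle_fibre:
  "(\<lambda>(z, w). (cmod z, cmod w)) ` {(z, w). circle_moment z w = (A, B)} = modulus_pairs A (cmod B)"
proof (intro equalityI subsetI)
  fix x assume "x \<in> (\<lambda>(z, w). (cmod z, cmod w)) ` {(z, w). circle_moment z w = (A, B)}"
  then show "x \<in> modulus_pairs A (cmod B)"
    by (auto simp: circle_moment_def modulus_pairs_def norm_mult)
next
  fix x assume "x \<in> modulus_pairs A (cmod B)"
  then obtain r s where x: "x = (r, s)" and rs: "r \<ge> 0" "s \<ge> 0" "r\<^sup>2/2 + s\<^sup>2/2 = A" "r * s = cmod B"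
    by (auto simp: modulus_pairs_def)
  \<comment> \<open>rotate \<open>z\<close> so that \<open>\<i> z w\<^sup>*\<close> gets the argument of \<open>B\<close>\<close>
  define e where "e = (if B = 0 then 1 else - \<i> * sgn B)"
  have "cmod e = 1" by (simp add: e_def norm_mult norm_sgn)
  moreover have "\<i> * (of_real r * e) * cnj (of_real s) = B"
    using rs by (auto simp: e_def sgn_eq algebra_simps simp flip: of_real_mult)
  ultimately have "circle_moment (of_real r * e) (of_real s) = (A, B)"
    using rs by (simp add: circle_moment_def norm_mult)
  moreover have "x = (cmod (of_real r * e), cmod (complex_of_real s))"
    using x rs \<open>cmod e = 1\<close> by (simp add: norm_mult)
  ultimately show "x \<in> (\<lambda>(z, w). (cmod z, cmod w)) ` {(z, w). circle_moment z w = (A, B)}"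
    by force
qed

definition moduli :: "(complex^'d) \<times> (complex^'d) \<Rightarrow> 'd \<Rightarrow> real \<times> real" where
  "moduli p k = (cmod (fst p $ k), cmod (snd p $ k))"

lemma moduli_product_fibre:
  fixes A :: "'d::finite \<Rightarrow> real" and B :: "'d \<Rightarrow> complex"
  shows "moduli ` {p. \<forall>k. circle_moment (fst p $ k) (snd p $ k) = (A k, B k)} =
    (\<Pi>\<^sub>E k\<in>UNIV. modulus_pairs (A k) (cmod (B k)))"
proof (intro equalityI subsetI)
  fix g assume "g \<in> moduli ` {p. \<forall>k. circle_moment (fst p $ k) (snd p $ k) = (A k, B k)}"
  then show "g \<in> (\<Pi>\<^sub>E k\<in>UNIV. modulus_pairs (A k) (cmod (B k)))"
    by (force simp: moduli_def simp flip: moduli_circle_fibre)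
next
  fix g assume "g \<in> (\<Pi>\<^sub>E k\<in>UNIV. modulus_pairs (A k) (cmod (B k)))"
  then have "\<forall>k. \<exists>zw. circle_moment (fst zw) (snd zw) = (A k, B k) \<and> (cmod (fst zw), cmod (snd zw)) = g k"
    by (force simp flip: moduli_circle_fibre)
  then obtain f where f: "\<And>k. circle_moment (fst (f k)) (snd (f k)) = (A k, B k)"
    "\<And>k. (cmod (fst (f k)), cmod (snd (f k))) = g k"
    by metis
  define p where "p = ((\<chi> k. fst (f k)), (\<chi> k. snd (f k)))"
  have "moduli p = g" using f(2) by (simp add: moduli_def p_def fun_eq_iff)
  moreover have "\<forall>k. circle_moment (fst p $ k) (snd p $ k) = (A k, B k)" using f(1) by (simp add: p_def)
  ultimately show "g \<in> moduli ` {p. \<forall>k. circle_moment (fst p $ k) (snd p $ k) = (A k, B k)}"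
    by blast
qed

lemma torus_act_compose: "torus_act s (torus_act t p) = torus_act (\<lambda>k. s k * t k) p"
  by (simp add: torus_act_def vec_eq_iff)

lemma torus_translate:
  fixes t :: "'d \<Rightarrow> complex"
  assumes "t \<in> torus"
  shows "(\<lambda>s k. s k * t k) ` torus = torus"
proof
  show "(\<lambda>s k. s k * t k) ` torus \<subseteq> torus"
    using assms by (auto simp: torus_def norm_mult)
  have nonzero: "t k \<noteq> 0" for k
    using assms by (auto simp: torus_def dest: spec[of _ k])
  show "torus \<subseteq> (\<lambda>s k. s k * t k) ` torus"
  proof
    fix s :: "'d \<Rightarrow> complex"
    assume "s \<in> torus"
    show "s \<in> (\<lambda>s k. s k * t k) ` torus"
    proof (rule image_eqI)
      show "(\<lambda>k. s k / t k) \<in> torus"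
        using assms \<open>s \<in> torus\<close> by (simp add: torus_def norm_divide)
      show "s = (\<lambda>k. s k / t k * t k)"
        using nonzero by (simp add: fun_eq_iff)
    qed
  qed
qed

lemma torus_orbit_torus_act:
  assumes "t \<in> torus"
  shows "torus_orbit (torus_act t p) = torus_orbit p"
proof -
  have "torus_orbit (torus_act t p) = (\<lambda>s. torus_act s p) ` (\<lambda>s k. s k * t k) ` torus"
    by (simp add: torus_orbit_def image_image torus_act_compose)
  then show ?thesis by (simp add: torus_translate[OF assms] torus_orbit_def)
qed

lemma self_in_torus_orbit: "p \<in> torus_orbit p"
  unfolding torus_orbit_def
  by (rule image_eqI[where x="\<lambda>k. 1"]) (simp_all add: torus_act_def torus_def vec_eq_iff)

lemma moduli_torus_act: "t \<in> torus \<Longrightarrow> moduli (torus_act t p) = moduli p"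
  by (auto simp: moduli_def torus_act_def torus_def norm_mult)

lemma torus_orbit_eq_iff_moduli_eq:
  assumes "\<forall>k. fst p $ k * cnj (snd p $ k) = fst q $ k * cnj (snd q $ k)"
  shows "torus_orbit p = torus_orbit q \<longleftrightarrow> moduli p = moduli q"
proof
  assume "torus_orbit p = torus_orbit q"
  then have "q \<in> torus_orbit p" using self_in_torus_orbit by blast
  then show "moduli p = moduli q" by (auto simp: torus_orbit_def moduli_torus_act)
next
  assume "moduli p = moduli q"
  then have "\<forall>k. \<exists>t. cmod t = 1 \<and> fst q $ k = t * fst p $ k \<and> snd q $ k = t * snd p $ k"
    using assms by (intro allI unit_multiple_if_same_moduli) (auto simp: moduli_def fun_eq_iff)
  then obtain t where "\<And>k. cmod (t k) = 1 \<and> fst q $ k = t k * fst p $ k \<and> snd q $ k = t k * snd p $ k"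
    by metis
  then have "t \<in> torus" "q = torus_act t p"
    by (auto simp: torus_def torus_act_def vec_eq_iff prod_eq_iff)
  then show "torus_orbit p = torus_orbit q" by (simp add: torus_orbit_torus_act)
qed

lemma bij_betw_images_same_kernel:
  assumes "\<And>x y. x \<in> X \<Longrightarrow> y \<in> X \<Longrightarrow> f x = f y \<longleftrightarrow> g x = g y"
  shows "bij_betw (g \<circ> inv_into X f) (f ` X) (g ` X)"
proof -
  have g_inv: "g (inv_into X f (f x)) = g x" if "x \<in> X" for x
    using assms[OF inv_into_into[of "f x" f X] that] f_inv_into_f[of "f x" f X] that by simp
  show ?thesis
  proof (rule bij_betw_imageI)
    show "inj_on (g \<circ> inv_into X f) (f ` X)"
      by (rule inj_onI) (auto simp: g_inv assms)
    show "(g \<circ> inv_into X f) ` f ` X = g ` X"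
      by (auto simp: image_comp g_inv)
  qed
qed

lemma moduli_phi_fibre:
  fixes u :: "'d::finite \<Rightarrow> real^'n::finite"
  assumes "span (range u) = UNIV"
  shows "moduli ` {p \<in> level_set u l1 l2 l3. phi u l1 l2 l3 p = (a, b)} =
    (\<Pi>\<^sub>E k\<in>UNIV. modulus_pairs (a_comp u l1 a k) (cmod (b_comp u l2 l3 b k)))"
proof -
  have "{p \<in> level_set u l1 l2 l3. phi u l1 l2 l3 p = (a, b)} =
      {p. \<forall>k. circle_moment (fst p $ k) (snd p $ k) = (a_comp u l1 a k, b_comp u l2 l3 b k)}"
    using phi_fibre_iff[OF assms] by blast
  then show ?thesis by (simp add: moduli_product_fibre)
qed

lemma phi_image_level_set:
  fixes u :: "'d::finite \<Rightarrow> real^'n::finite"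
  assumes "span (range u) = UNIV"
  shows "phi u l1 l2 l3 ` level_set u l1 l2 l3 = Kset u l1 l2 l3"
proof -
  have "(a, b) \<in> phi u l1 l2 l3 ` level_set u l1 l2 l3 \<longleftrightarrow> (a, b) \<in> Kset u l1 l2 l3" for a b
  proof -
    have "(a, b) \<in> phi u l1 l2 l3 ` level_set u l1 l2 l3 \<longleftrightarrow>
        moduli ` {p \<in> level_set u l1 l2 l3. phi u l1 l2 l3 p = (a, b)} \<noteq> {}"
      by force
    also have "\<dots> \<longleftrightarrow> (\<forall>k. modulus_pairs (a_comp u l1 a k) (cmod (b_comp u l2 l3 b k)) \<noteq> {})"
      by (simp add: moduli_phi_fibre[OF assms] PiE_eq_empty_iff)
    also have "\<dots> \<longleftrightarrow> (a, b) \<in> Kset u l1 l2 l3"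
      by (simp add: modulus_pairs_eq_empty_iff Kset_def)
    finally show ?thesis .
  qed
  then show ?thesis by auto
qed

lemma mu_coeffs_circle_moment:
  "muI_coeff l1 z w k = fst (circle_moment (z$k) (w$k)) + l1 k"
  "muC_coeff l2 l3 z w k = snd (circle_moment (z$k) (w$k)) + lam_c l2 l3 k"
  by (simp_all add: muI_coeff_def muC_coeff_def circle_moment_def)

lemma mu_coeffs_torus_act:
  assumes "t \<in> torus"
  shows "muI_coeff l1 (fst (torus_act t p)) (snd (torus_act t p)) = muI_coeff l1 (fst p) (snd p)"
    and "muC_coeff l2 l3 (fst (torus_act t p)) (snd (torus_act t p)) = muC_coeff l2 l3 (fst p) (snd p)"
  using assms by (simp_all add: fun_eq_iff mu_coeffs_circle_moment torus_act_def torus_def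
      circle_moment_mult)

lemma level_set_torus_act:
  fixes u :: "'d::finite \<Rightarrow> real^'n::finite"
  shows "t \<in> torus \<Longrightarrow> torus_act t p \<in> level_set u l1 l2 l3 \<longleftrightarrow> p \<in> level_set u l1 l2 l3"
  by (simp add: level_set_iff mu_coeffs_torus_act)

lemma phi_torus_act: "t \<in> torus \<Longrightarrow> phi u l1 l2 l3 (torus_act t p) = phi u l1 l2 l3 p"
  by (simp add: phi_def mu_coeffs_torus_act)

lemma torus_orbits_phi_fibre:
  fixes u :: "'d::finite \<Rightarrow> real^'n::finite"
  assumes span: "span (range u) = UNIV" and K: "(a, b) \<in> Kset u l1 l2 l3"
  defines "F \<equiv> {p \<in> level_set u l1 l2 l3. phi u l1 l2 l3 p = (a, b)}"
  shows "finite (torus_orbit ` F)"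
    and "card (torus_orbit ` F) = 2 ^ card {k. a_comp u l1 a k > cmod (b_comp u l2 l3 b k)}"
proof -
  define S where "S k = modulus_pairs (a_comp u l1 a k) (cmod (b_comp u l2 l3 b k))" for k
  have fibre: "\<i> * fst p $ k * cnj (snd p $ k) = b_comp u l2 l3 b k" if "p \<in> F" for p k
    using that phi_fibre_iff[OF span, of p l1 l2 l3 a b] by (simp add: F_def circle_moment_def)
  have "torus_orbit p = torus_orbit q \<longleftrightarrow> moduli p = moduli q" if "p \<in> F" "q \<in> F" for p q
  proof (rule torus_orbit_eq_iff_moduli_eq, rule allI)
    fix k
    have "\<i> * (fst p $ k * cnj (snd p $ k)) = \<i> * (fst q $ k * cnj (snd q $ k))"
      using fibre[OF that(1), of k] fibre[OF that(2), of k] by (simp only: mult.assoc)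
    then show "fst p $ k * cnj (snd p $ k) = fst q $ k * cnj (snd q $ k)"
      by simp
  qed
  then have "bij_betw (moduli \<circ> inv_into F torus_orbit) (torus_orbit ` F) (moduli ` F)"
    by (rule bij_betw_images_same_kernel)
  also have "moduli ` F = (\<Pi>\<^sub>E k\<in>UNIV. S k)"
    unfolding F_def S_def by (rule moduli_phi_fibre[OF span])
  finally have bij: "bij_betw (moduli \<circ> inv_into F torus_orbit) (torus_orbit ` F) (\<Pi>\<^sub>E k\<in>UNIV. S k)" .
  have "finite (\<Pi>\<^sub>E k\<in>UNIV. S k)"
    by (simp add: finite_PiE S_def finite_modulus_pairs)
  then show "finite (torus_orbit ` F)"
    using bij bij_betw_finite by blast
  have "card (\<Pi>\<^sub>E k\<in>UNIV. S k) =
      (\<Prod>k\<in>UNIV. if a_comp u l1 a k > cmod (b_comp u l2 l3 b k) then 2 else 1)"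
    using K by (simp add: card_PiE S_def card_modulus_pairs Kset_def)
  also have "\<dots> = 2 ^ card {k. a_comp u l1 a k > cmod (b_comp u l2 l3 b k)}"
    by (simp add: prod.If_cases)
  finally show "card (torus_orbit ` F) = 2 ^ card {k. a_comp u l1 a k > cmod (b_comp u l2 l3 b k)}"
    using bij_betw_same_card[OF bij] by simp
qed

theorem proposition5p1:
  fixes u :: "'d::finite \<Rightarrow> real^'n::finite"
    and l1 l2 l3 :: "'d \<Rightarrow> real"
  assumes integral: "\<And>k j. u k $ j \<in> \<int>"
    and spanning: "span (range u) = UNIV"
  shows "phi u l1 l2 l3 ` level_set u l1 l2 l3 = Kset u l1 l2 l3 \<and>
    (\<forall>p\<in>level_set u l1 l2 l3. \<forall>t\<in>torus.
        torus_act t p \<in> level_set u l1 l2 l3 \<and>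
        phi u l1 l2 l3 (torus_act t p) = phi u l1 l2 l3 p) \<and>
    (\<forall>a b. (a, b) \<in> Kset u l1 l2 l3 \<longrightarrow>
        finite {torus_orbit p | p. p \<in> level_set u l1 l2 l3 \<and> phi u l1 l2 l3 p = (a, b)} \<and>
        card {torus_orbit p | p. p \<in> level_set u l1 l2 l3 \<and> phi u l1 l2 l3 p = (a, b)}
          = 2 ^ card {k. a_comp u l1 a k > cmod (b_comp u l2 l3 b k)})"
proof (intro conjI ballI allI impI)
  show "phi u l1 l2 l3 ` level_set u l1 l2 l3 = Kset u l1 l2 l3"
    by (rule phi_image_level_set[OF spanning])
next
  fix p and t :: "'d \<Rightarrow> complex"
  assume "p \<in> level_set u l1 l2 l3" and "t \<in> torus"
  then show "torus_act t p \<in> level_set u l1 l2 l3" "phi u l1 l2 l3 (torus_act t p) = phi u l1 l2 l3 p"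
    by (simp_all add: level_set_torus_act phi_torus_act)
next
  fix a b assume "(a, b) \<in> Kset u l1 l2 l3"
  moreover have "{torus_orbit p | p. p \<in> level_set u l1 l2 l3 \<and> phi u l1 l2 l3 p = (a, b)} =
      torus_orbit ` {p \<in> level_set u l1 l2 l3. phi u l1 l2 l3 p = (a, b)}"
    by blast
  ultimately show
    "finite {torus_orbit p | p. p \<in> level_set u l1 l2 l3 \<and> phi u l1 l2 l3 p = (a, b)}"
    "card {torus_orbit p | p. p \<in> level_set u l1 l2 l3 \<and> phi u l1 l2 l3 p = (a, b)}
      = 2 ^ card {k. a_comp u l1 a k > cmod (b_comp u l2 l3 b k)}"
    using torus_orbits_phi_fibre[OF spanning] by simp_all
qed

end
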